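(* Let $V$ be a real vector space with inner products $\langle\cdot,\cdot\rangle_1,\langle\cdot,\cdot\rangle_2$ and induced norms $\|\cdot\|_1,\|\cdot\|_2$. The following are equivalent: (1) there is $c>0$ with $\langle\cdot,\cdot\rangle_2=c\langle\cdot,\cdot\rangle_1$; (2) there is $c>0$ with $\|\cdot\|_2=c\|\cdot\|_1$; (3) for all nonzero $x,y\in V$, the angle between $x$ and $y$ with respect to $\langle\cdot,\cdot\rangle_1$ equals that with respect to $\langle\cdot,\cdot\rangle_2$; (4) for all nonzero $x,y\in V$, $\langle x,y\rangle_1=0$ if and only if $\langle x,y\rangle_2=0$; (5) there exists $\theta_0\in(0,\pi)$ such that for all nonzero $x,y\in V$, the angle between $x$ and $y$ with respect to $\langle\cdot,\cdot\rangle_1$ is $\theta_0$ if and only if the angle between them with respect to $\langle\cdot,\cdot\rangle_2$ is $\theta_0$.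
   Context: For an inner product $\langle\cdot,\cdot\rangle$ on a real vector space with norm $\|x\|=\sqrt{\langle x,x\rangle}$, the angle between nonzero vectors $x,y$ is the unique $\theta\in[0,\pi]$ with $\cos\theta=\langle x,y\rangle/(\|x\|\|y\|)$. *)

theory Defs
  imports Complex_Main
begin

definition is_inner_product :: "('a::real_vector \<Rightarrow> 'a \<Rightarrow> real) \<Rightarrow> bool" where
  "is_inner_product B \<longleftrightarrow>
     (\<forall>x y. B x y = B y x) \<and>
     (\<forall>x y z. B (x + y) z = B x z + B y z) \<and>
     (\<forall>r x y. B (r *\<^sub>R x) y = r * B x y) \<and>
     (\<forall>x. x \<noteq> 0 \<longrightarrow> B x x > 0)"

definition ip_norm :: "('a \<Rightarrow> 'a \<Rightarrow> real) \<Rightarrow> 'a \<Rightarrow> real" where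
  "ip_norm B x = sqrt (B x x)"

definition ip_angle :: "('a \<Rightarrow> 'a \<Rightarrow> real) \<Rightarrow> 'a \<Rightarrow> 'a \<Rightarrow> real" where
  "ip_angle B x y = arccos (B x y / (ip_norm B x * ip_norm B y))"

end

theory Submission
  imports Defs
begin

text \<open>
  Scaling a form by \<open>c\<close> scales its norm by \<open>\<surd>c\<close> and leaves all cosines unchanged, and
  polarization recovers a form from its norm; this gives (1) \<open>\<Leftrightarrow>\<close> (2) \<open>\<Rightarrow>\<close> (3), and (3) gives (5)
  with \<open>\<theta>\<^sub>0 = \<pi>/2\<close>.
  If \<open>B\<^sub>1\<close>-orthogonality implies \<open>B\<^sub>2\<close>-orthogonality, projecting \<open>y\<close> onto \<open>x\<close> gives
  \<open>B\<^sub>2 x y = (B\<^sub>2 x x / B\<^sub>1 x x) B\<^sub>1 x y\<close>, so the ratio \<open>B\<^sub>2 x x / B\<^sub>1 x x\<close> is the same for any two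
  non-orthogonal vectors, hence (passing through \<open>x + y\<close>) for all nonzero vectors; this is (4) \<open>\<Rightarrow>\<close> (1).
  For (5) \<open>\<Rightarrow>\<close> (4), rotate a \<open>B\<^sub>1\<close>-orthonormal pair \<open>x, y\<close> within its plane to a pair \<open>e\<^sub>1, e\<^sub>2\<close>
  that is also \<open>B\<^sub>2\<close>-orthogonal. The \<open>B\<^sub>1\<close>-unit vectors \<open>cos(\<theta>\<^sub>0/2) e\<^sub>1 \<plusminus> sin(\<theta>\<^sub>0/2) e\<^sub>2\<close> enclose the
  \<open>B\<^sub>1\<close>-angle \<open>\<theta>\<^sub>0\<close>, and their \<open>B\<^sub>2\<close>-angle is \<open>\<theta>\<^sub>0\<close> only if \<open>B\<^sub>2 e\<^sub>1 e\<^sub>1 = B\<^sub>2 e\<^sub>2 e\<^sub>2\<close>. Then \<open>B\<^sub>2\<close> is a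
  multiple of \<open>B\<^sub>1\<close> on the plane, so \<open>B\<^sub>2 x y = 0\<close>.
\<close>

lemma exists_sin_cos_ratio:
  fixes a b :: real
  shows "\<exists>\<psi>. a * sin \<psi> = b * cos \<psi>"
proof (cases "a = 0")
  case True
  show ?thesis
    by (rule exI[where x = "pi/2"]) (simp add: True)
next
  case False
  define \<psi> where "\<psi> = arctan (b / a)"
  have "sin \<psi> = b / a * cos \<psi>"
    using tan_arctan[of "b / a"] cos_arctan_not_zero[of "b / a"]
    unfolding \<psi>_def tan_def by (simp add: field_simps)
  thus ?thesis
    using False by (intro exI[where x = \<psi>]) simp
qed

locale inner_product_form =
  fixes B :: "'a::real_vector \<Rightarrow> 'a \<Rightarrow> real"
  assumes inner_product: "is_inner_product B"
begin

lemma sym: "B x y = B y x"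
  and add_left [simp]: "B (x + y) z = B x z + B y z"
  and scaleR_left [simp]: "B (r *\<^sub>R x) y = r * B x y"
  and pos: "x \<noteq> 0 \<Longrightarrow> B x x > 0"
  using inner_product unfolding is_inner_product_def by auto

lemma add_right [simp]: "B z (x + y) = B z x + B z y"
  by (metis sym add_left)

lemma scaleR_right [simp]: "B y (r *\<^sub>R x) = r * B y x"
  by (metis sym scaleR_left)

lemma diff_right: "B z (x - y) = B z x - B z y"
  using add_right[of z x "- y"] scaleR_right[of z "-1" y] by simp

lemma zero_left [simp]: "B 0 y = 0"
  by (metis scaleR_left mult_zero_left scaleR_zero_left)

lemma zero_right [simp]: "B y 0 = 0"
  by (metis sym zero_left)

lemma nonneg: "B x x \<ge> 0"
  by (metis pos zero_left order.strict_implies_order order_refl)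

lemma eq_0_iff [simp]: "B x x = 0 \<longleftrightarrow> x = 0"
  using pos by fastforce

lemma combination:
  "B (a *\<^sub>R x + b *\<^sub>R y) (c *\<^sub>R x + d *\<^sub>R y) = a*c * B x x + (a*d + b*c) * B x y + b*d * B y y"
  using sym[of y x] by (simp add: algebra_simps)

lemma polarization: "B x y = (B (x + y) (x + y) - B x x - B y y) / 2"
  using sym[of y x] by simp

lemma Cauchy_Schwarz: "(B x y)\<^sup>2 \<le> B x x * B y y"
proof (cases "y = 0")
  case False
  hence p: "B y y > 0" by (rule pos)
  define t where "t = B x y / B y y"
  have "0 \<le> B (1 *\<^sub>R x + (-t) *\<^sub>R y) (1 *\<^sub>R x + (-t) *\<^sub>R y)"
    by (rule nonneg)
  also have "\<dots> = B x x - (B x y)\<^sup>2 / B y y"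
    using p unfolding combination t_def by (simp add: field_simps power2_eq_square)
  finally show ?thesis using p by (simp add: field_simps)
qed simp

lemma cos_ip_angle: "cos (ip_angle B x y) = B x y / (ip_norm B x * ip_norm B y)"
proof -
  have "\<bar>B x y\<bar> \<le> sqrt (B x x * B y y)"
    using real_sqrt_le_mono[OF Cauchy_Schwarz] by simp
  hence "\<bar>B x y\<bar> \<le> ip_norm B x * ip_norm B y"
    unfolding ip_norm_def by (simp add: real_sqrt_mult)
  moreover have "ip_norm B x * ip_norm B y \<ge> 0"
    unfolding ip_norm_def using nonneg by simp
  ultimately have "\<bar>B x y / (ip_norm B x * ip_norm B y)\<bar> \<le> 1"
    by (cases "ip_norm B x * ip_norm B y = 0")
      (simp_all add: abs_divide divide_le_eq_1 less_le)
  thus ?thesis unfolding ip_angle_def by (simp add: cos_arccos_abs)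
qed

lemma ip_norm_square: "(ip_norm B x)\<^sup>2 = B x x"
  unfolding ip_norm_def using nonneg by simp

lemma ip_angle_unit:
  assumes "B x x = 1" and "B y y = 1"
  shows "ip_angle B x y = arccos (B x y)"
  using assms unfolding ip_angle_def ip_norm_def by simp

lemma normalize_unit:
  assumes "x \<noteq> 0"
  shows "B (inverse (ip_norm B x) *\<^sub>R x) (inverse (ip_norm B x) *\<^sub>R x) = 1"
proof -
  have "sqrt (B x x) * sqrt (B x x) = B x x"
    using nonneg by simp
  thus ?thesis
    using assms unfolding ip_norm_def by (simp add: field_simps)
qed

text \<open>The rotation angle is half the polar angle of the point \<open>(B x x - B y y, 2 B x y)\<close>.\<close>

lemma exists_rotation_orthogonal:
  "\<exists>\<phi>. B (cos \<phi> *\<^sub>R x + sin \<phi> *\<^sub>R y) ((- sin \<phi>) *\<^sub>R x + cos \<phi> *\<^sub>R y) = 0"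
proof -
  obtain \<psi> where \<psi>: "(B x x - B y y) * sin \<psi> = 2 * B x y * cos \<psi>"
    using exists_sin_cos_ratio by blast
  have "B (cos (\<psi>/2) *\<^sub>R x + sin (\<psi>/2) *\<^sub>R y) ((- sin (\<psi>/2)) *\<^sub>R x + cos (\<psi>/2) *\<^sub>R y)
      = (B y y - B x x) * sin \<psi> / 2 + B x y * cos \<psi>"
    unfolding combination sin_double[of "\<psi>/2", simplified] cos_double[of "\<psi>/2", simplified]
    by (simp add: field_simps power2_eq_square)
  also have "\<dots> = 0"
    using \<psi> by (simp add: algebra_simps)
  finally show ?thesis by blast
qed

end

lemma ip_norm_scaled:
  assumes "\<forall>x y. B2 x y = c * B1 x y" and "c > 0"
  shows "ip_norm B2 x = sqrt c * ip_norm B1 x"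
  using assms unfolding ip_norm_def by (simp add: real_sqrt_mult)

lemma ip_angle_scaled:
  assumes "\<forall>x y. B2 x y = c * B1 x y" and "c > 0"
  shows "ip_angle B2 x y = ip_angle B1 x y"
proof -
  have "ip_norm B2 x * ip_norm B2 y = (sqrt c * sqrt c) * (ip_norm B1 x * ip_norm B1 y)"
    unfolding ip_norm_scaled[OF assms] by (simp only: mult_ac)
  hence "B2 x y / (ip_norm B2 x * ip_norm B2 y) = (c * B1 x y) / (c * (ip_norm B1 x * ip_norm B1 y))"
    using assms by simp
  also have "\<dots> = B1 x y / (ip_norm B1 x * ip_norm B1 y)"
    using \<open>c > 0\<close> by simp
  finally show ?thesis
    unfolding ip_angle_def by simp
qed

locale inner_product_pair =
  B1: inner_product_form B1 + B2: inner_product_form B2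
  for B1 B2 :: "'a::real_vector \<Rightarrow> 'a \<Rightarrow> real"
begin

lemma proportional_if_quadratic_forms_proportional:
  assumes "\<And>x. B2 x x = c * B1 x x"
  shows "B2 x y = c * B1 x y"
proof -
  have "B2 x y = (B2 (x + y) (x + y) - B2 x x - B2 y y) / 2"
    by (rule B2.polarization)
  also have "\<dots> = c * ((B1 (x + y) (x + y) - B1 x x - B1 y y) / 2)"
    by (simp only: assms) (simp add: algebra_simps)
  also have "\<dots> = c * B1 x y"
    by (simp only: B1.polarization[symmetric])
  finally show ?thesis .
qed

lemma ratio_if_orthogonality_preserved:
  assumes orth: "\<And>x y. \<lbrakk>x \<noteq> 0; y \<noteq> 0; B1 x y = 0\<rbrakk> \<Longrightarrow> B2 x y = 0"
    and "x \<noteq> 0"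
  shows "B2 x y = B2 x x / B1 x x * B1 x y"
proof -
  have pos: "B1 x x > 0" using B1.pos[OF \<open>x \<noteq> 0\<close>] .
  define z where "z = y - (B1 x y / B1 x x) *\<^sub>R x"
  have "B1 x z = 0"
    using pos unfolding z_def by (simp add: B1.diff_right)
  hence "B2 x z = 0"
    using orth[OF \<open>x \<noteq> 0\<close>, of z] by (cases "z = 0") simp_all
  thus ?thesis
    using pos unfolding z_def by (simp add: B2.diff_right field_simps)
qed

lemma ratio_eq_if_orthogonality_preserved:
  assumes orth: "\<And>x y. \<lbrakk>x \<noteq> 0; y \<noteq> 0; B1 x y = 0\<rbrakk> \<Longrightarrow> B2 x y = 0"
    and "x \<noteq> 0" and "y \<noteq> 0"
  shows "B2 x x / B1 x x = B2 y y / B1 y y"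
proof -
  have eq_if_not_orth: "B2 u u / B1 u u = B2 v v / B1 v v" if "B1 u v \<noteq> 0" for u v
  proof -
    have "u \<noteq> 0" "v \<noteq> 0" using that by auto
    hence "B2 u u / B1 u u * B1 u v = B2 v v / B1 v v * B1 u v"
      using ratio_if_orthogonality_preserved[OF orth] B1.sym[of u v] B2.sym[of u v] by metis
    thus ?thesis using that mult_cancel_right by metis
  qed
  show ?thesis
  proof (cases "B1 x y = 0")
    case True
    have "B1 y x = 0"
      using True B1.sym by metis
    hence "B1 x (x + y) = B1 x x" "B1 y (x + y) = B1 y y"
      using True by simp_all
    hence "B1 x (x + y) \<noteq> 0" "B1 y (x + y) \<noteq> 0"
      using \<open>x \<noteq> 0\<close> \<open>y \<noteq> 0\<close> by simp_all
    thus ?thesis using eq_if_not_orth by metis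
  qed (rule eq_if_not_orth)
qed

lemma proportional_if_orthogonality_preserved:
  assumes orth: "\<And>x y. \<lbrakk>x \<noteq> 0; y \<noteq> 0; B1 x y = 0\<rbrakk> \<Longrightarrow> B2 x y = 0"
  shows "\<exists>c>0. \<forall>x y. B2 x y = c * B1 x y"
proof (cases "\<exists>x0::'a. x0 \<noteq> 0")
  case True
  then obtain x0 :: 'a where "x0 \<noteq> 0" by blast
  define c where "c = B2 x0 x0 / B1 x0 x0"
  have "c > 0"
    unfolding c_def using B1.pos B2.pos \<open>x0 \<noteq> 0\<close> by simp
  moreover have "B2 x x = c * B1 x x" for x
  proof (cases "x = 0")
    case False
    have "B2 x x / B1 x x = c"
      unfolding c_def using ratio_eq_if_orthogonality_preserved[OF orth False \<open>x0 \<noteq> 0\<close>] .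
    thus ?thesis using False by (simp add: divide_eq_eq)
  qed simp
  ultimately show ?thesis
    using proportional_if_quadratic_forms_proportional by blast
next
  case False
  hence "B2 x y = 1 * B1 x y" for x y
    by (metis B1.zero_left B2.zero_left mult_1)
  thus ?thesis by (intro exI[where x = 1]) simp
qed

lemma diagonal_equal_if_angle_preserved:
  assumes "0 < \<theta>" "\<theta> < pi"
    and angle: "\<And>u v. \<lbrakk>u \<noteq> 0; v \<noteq> 0; ip_angle B1 u v = \<theta>\<rbrakk> \<Longrightarrow> ip_angle B2 u v = \<theta>"
    and e: "B1 e1 e1 = 1" "B1 e2 e2 = 1" "B1 e1 e2 = 0" "B2 e1 e2 = 0"
  shows "B2 e1 e1 = B2 e2 e2"
proof -
  define c s where "c = cos (\<theta>/2)" and "s = sin (\<theta>/2)"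
  have "c > 0" "s > 0"
    unfolding c_def s_def using \<open>0 < \<theta>\<close> \<open>\<theta> < pi\<close> by (simp_all add: cos_gt_zero_pi sin_gt_zero)
  have cs: "c*c + s*s = 1" and cos_\<theta>: "cos \<theta> = c*c - s*s"
    unfolding c_def s_def using cos_double[of "\<theta>/2"] by (simp_all add: power2_eq_square)
  define u v where "u = c *\<^sub>R e1 + (-s) *\<^sub>R e2" and "v = c *\<^sub>R e1 + s *\<^sub>R e2"
  have "B1 u u = 1" "B1 v v = 1" "B1 u v = cos \<theta>"
    unfolding u_def v_def B1.combination e cos_\<theta> using cs by simp_all
  hence "u \<noteq> 0" "v \<noteq> 0" and "ip_angle B1 u v = \<theta>"
    using \<open>0 < \<theta>\<close> \<open>\<theta> < pi\<close> by (auto simp: B1.ip_angle_unit arccos_cos)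
  hence "cos \<theta> = B2 u v / (ip_norm B2 u * ip_norm B2 v)"
    using angle B2.cos_ip_angle by metis
  moreover define a d Q where "a = B2 e1 e1" and "d = B2 e2 e2" and "Q = c*c*a + s*s*d"
  moreover have "B2 u u = Q" "B2 v v = Q" "B2 u v = c*c*a - s*s*d"
    unfolding u_def v_def B2.combination e Q_def a_def d_def by simp_all
  moreover have "Q > 0"
    using B2.pos[OF \<open>u \<noteq> 0\<close>] \<open>B2 u u = Q\<close> by simp
  ultimately have B2_cos: "c*c*a - s*s*d = (c*c - s*s) * Q"
    unfolding cos_\<theta> ip_norm_def by (simp add: real_sqrt_mult[symmetric])
  have "2*(c*c)*(s*s)*(a - d) = (c*c + s*s) * (c*c*a - s*s*d) - (c*c - s*s) * Q"
    unfolding Q_def by (simp add: algebra_simps)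
  also have "\<dots> = 0"
    using B2_cos cs by simp
  finally show ?thesis
    using \<open>c > 0\<close> \<open>s > 0\<close> unfolding a_def d_def by simp
qed

lemma orthogonal_if_angle_preserved_orthonormal:
  assumes "0 < \<theta>" "\<theta> < pi"
    and angle: "\<And>u v. \<lbrakk>u \<noteq> 0; v \<noteq> 0; ip_angle B1 u v = \<theta>\<rbrakk> \<Longrightarrow> ip_angle B2 u v = \<theta>"
    and xy: "B1 x x = 1" "B1 y y = 1" "B1 x y = 0"
  shows "B2 x y = 0"
proof -
  obtain \<phi> where diag: "B2 (cos \<phi> *\<^sub>R x + sin \<phi> *\<^sub>R y) ((- sin \<phi>) *\<^sub>R x + cos \<phi> *\<^sub>R y) = 0"
    using B2.exists_rotation_orthogonal by blast
  define c s e1 e2 where "c = cos \<phi>" and "s = sin \<phi>"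
    and "e1 = c *\<^sub>R x + s *\<^sub>R y" and "e2 = (- s) *\<^sub>R x + c *\<^sub>R y"
  have cs: "c*c + s*s = 1"
    unfolding c_def s_def by (simp add: sin_cos_squared_add3)
  have "B1 e1 e1 = 1" "B1 e2 e2 = 1" "B1 e1 e2 = 0"
    unfolding e1_def e2_def B1.combination xy using cs by (simp_all add: algebra_simps)
  moreover have "B2 e1 e2 = 0"
    using diag unfolding e1_def e2_def c_def s_def .
  ultimately have "B2 e1 e1 = B2 e2 e2"
    using diagonal_equal_if_angle_preserved[OF \<open>0 < \<theta>\<close> \<open>\<theta> < pi\<close> angle] by blast
  moreover have "(c*c - s*s) * B2 e1 e2 + c*s * (B2 e1 e1 - B2 e2 e2) = (c*c + s*s)\<^sup>2 * B2 x y"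
    unfolding e1_def e2_def B2.combination by (simp add: algebra_simps power2_eq_square)
  ultimately show ?thesis
    using \<open>B2 e1 e2 = 0\<close> cs by simp
qed

lemma orthogonality_preserved_if_angle_preserved:
  assumes "0 < \<theta>" "\<theta> < pi"
    and angle: "\<And>u v. \<lbrakk>u \<noteq> 0; v \<noteq> 0; ip_angle B1 u v = \<theta>\<rbrakk> \<Longrightarrow> ip_angle B2 u v = \<theta>"
    and "x \<noteq> 0" "y \<noteq> 0" "B1 x y = 0"
  shows "B2 x y = 0"
proof -
  define x' y' where "x' = inverse (ip_norm B1 x) *\<^sub>R x" and "y' = inverse (ip_norm B1 y) *\<^sub>R y"
  have "B1 x' x' = 1" "B1 y' y' = 1" "B1 x' y' = 0"
    unfolding x'_def y'_def using B1.normalize_unit \<open>x \<noteq> 0\<close> \<open>y \<noteq> 0\<close> \<open>B1 x y = 0\<close> by simp_all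
  hence "B2 x' y' = 0"
    using orthogonal_if_angle_preserved_orthonormal[OF \<open>0 < \<theta>\<close> \<open>\<theta> < pi\<close> angle] by blast
  moreover have "ip_norm B1 x \<noteq> 0" "ip_norm B1 y \<noteq> 0"
    using \<open>x \<noteq> 0\<close> \<open>y \<noteq> 0\<close> unfolding ip_norm_def by simp_all
  ultimately show ?thesis
    unfolding x'_def y'_def by simp
qed

lemma proportional_iff_norms_proportional:
  "(\<exists>c>0. \<forall>x y. B2 x y = c * B1 x y) \<longleftrightarrow> (\<exists>c>0. \<forall>x. ip_norm B2 x = c * ip_norm B1 x)"
proof
  assume "\<exists>c>0. \<forall>x y. B2 x y = c * B1 x y"
  then obtain c where "c > 0" and scaled: "\<forall>x y. B2 x y = c * B1 x y"
    by blast
  have "\<forall>x. ip_norm B2 x = sqrt c * ip_norm B1 x"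
    using ip_norm_scaled[OF scaled \<open>c > 0\<close>] by blast
  thus "\<exists>c>0. \<forall>x. ip_norm B2 x = c * ip_norm B1 x"
    using \<open>c > 0\<close> real_sqrt_gt_zero by blast
next
  assume "\<exists>c>0. \<forall>x. ip_norm B2 x = c * ip_norm B1 x"
  then obtain c where "c > 0" and "\<forall>x. ip_norm B2 x = c * ip_norm B1 x"
    by blast
  hence "B2 x x = c\<^sup>2 * B1 x x" for x
    by (metis B1.ip_norm_square B2.ip_norm_square power_mult_distrib)
  hence "\<forall>x y. B2 x y = c\<^sup>2 * B1 x y"
    using proportional_if_quadratic_forms_proportional by blast
  thus "\<exists>c>0. \<forall>x y. B2 x y = c * B1 x y"
    using \<open>c > 0\<close> by (intro exI[where x = "c\<^sup>2"]) simp
qed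

lemma orthogonality_iff_if_angle_iff:
  assumes "0 < \<theta>" "\<theta> < pi"
    and same_angle: "\<And>u v. \<lbrakk>u \<noteq> 0; v \<noteq> 0\<rbrakk> \<Longrightarrow> ip_angle B1 u v = \<theta> \<longleftrightarrow> ip_angle B2 u v = \<theta>"
    and "x \<noteq> 0" "y \<noteq> 0"
  shows "B1 x y = 0 \<longleftrightarrow> B2 x y = 0"
proof -
  interpret swapped: inner_product_pair B2 B1 ..
  have "\<And>u v. \<lbrakk>u \<noteq> 0; v \<noteq> 0; ip_angle B1 u v = \<theta>\<rbrakk> \<Longrightarrow> ip_angle B2 u v = \<theta>"
    and "\<And>u v. \<lbrakk>u \<noteq> 0; v \<noteq> 0; ip_angle B2 u v = \<theta>\<rbrakk> \<Longrightarrow> ip_angle B1 u v = \<theta>"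
    using same_angle by blast+
  thus ?thesis
    using orthogonality_preserved_if_angle_preserved[OF \<open>0 < \<theta>\<close> \<open>\<theta> < pi\<close>]
      swapped.orthogonality_preserved_if_angle_preserved[OF \<open>0 < \<theta>\<close> \<open>\<theta> < pi\<close>]
      \<open>x \<noteq> 0\<close> \<open>y \<noteq> 0\<close>
    by blast
qed

end

theorem mainTheorem6:
  fixes B1 B2 :: "'a::real_vector \<Rightarrow> 'a \<Rightarrow> real"
  assumes "is_inner_product B1" and "is_inner_product B2"
  defines "P1 \<equiv> (\<exists>c>0. \<forall>x y. B2 x y = c * B1 x y)"
      and "P2 \<equiv> (\<exists>c>0. \<forall>x. ip_norm B2 x = c * ip_norm B1 x)"
      and "P3 \<equiv> (\<forall>x y. x \<noteq> 0 \<longrightarrow> y \<noteq> 0 \<longrightarrow> ip_angle B1 x y = ip_angle B2 x y)"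
      and "P4 \<equiv> (\<forall>x y. x \<noteq> 0 \<longrightarrow> y \<noteq> 0 \<longrightarrow> (B1 x y = 0 \<longleftrightarrow> B2 x y = 0))"
      and "P5 \<equiv> (\<exists>\<theta>0. 0 < \<theta>0 \<and> \<theta>0 < pi \<and>
                 (\<forall>x y. x \<noteq> 0 \<longrightarrow> y \<noteq> 0 \<longrightarrow> (ip_angle B1 x y = \<theta>0 \<longleftrightarrow> ip_angle B2 x y = \<theta>0)))"
  shows "(P1 \<longleftrightarrow> P2) \<and> (P2 \<longleftrightarrow> P3) \<and> (P3 \<longleftrightarrow> P4) \<and> (P4 \<longleftrightarrow> P5)"
proof -
  interpret inner_product_pair B1 B2
    using assms by (simp add: inner_product_pair_def inner_product_form_def)
  have "P1 \<longleftrightarrow> P2"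
    unfolding P1_def P2_def by (rule proportional_iff_norms_proportional)
  moreover have "P1 \<Longrightarrow> P3"
    unfolding P1_def P3_def by (metis ip_angle_scaled)
  moreover have "P3 \<Longrightarrow> P5"
    unfolding P3_def P5_def by (intro exI[where x = "pi/2"]) auto
  moreover have "P5 \<Longrightarrow> P4"
    unfolding P4_def P5_def using orthogonality_iff_if_angle_iff by metis
  moreover have "P4 \<Longrightarrow> P1"
    unfolding P4_def P1_def using proportional_if_orthogonality_preserved by blast
  ultimately show ?thesis by blast
qed

end
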